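(* Every consistent theory $x$ can be extended to a maximal consistent theory $y\supseteq x$.
   Context: Fix a finite set $A$ of agents and a countable set $P$ of propositional variables. The language $\mathcal{L}_{CoRGAL}$ is given by $\varphi ::= p \mid \neg\varphi \mid (\varphi\wedge\varphi) \mid K_a\varphi \mid [\varphi]\varphi \mid [G,\varphi]\varphi \mid [\langle G\rangle]\varphi$ with $p\in P$, $a\in A$, $G\subseteq A$. $\mathcal{L}_{EL}$ is the fragment built only from $p,\neg,\wedge,K_a$. Duals: $\langle\psi\rangle\varphi:=\neg[\psi]\neg\varphi$, $\langle G,\psi\rangle\varphi:=\neg[G,\psi]\neg\varphi$. $\mathcal{L}^G_{EL}$ is the set of formulas $\bigwedge_{i\in G}K_i\varphi_i$ with $\varphi_i\in\mathcal{L}_{EL}$; $\psi_G$ ranges over it. Necessity forms: $\eta ::= \sharp \mid \varphi\to\eta(\sharp)\mid K_a\eta(\sharp)\mid[\varphi]\eta(\sharp)$; $\sharp$ occurs exactly once and $\eta(\varphi)$ is the result of replacing $\sharp$ by $\varphi$. $\mathbf{CoRGAL}$ is the smallest set of formulas containing all instances of: (A0) propositional tautologies; (A1) $K_a(\varphi\to\psi)\to(K_a\varphi\to K_a\psi)$; (A2) $K_a\varphi\to\varphi$; (A3) $K_a\varphi\to K_aK_a\varphi$; (A4) $\neg K_a\varphi\to K_a\neg K_a\varphi$; (A5) $[\varphi]p\leftrightarrow(\varphi\to p)$; (A6) $[\varphi]\neg\psi\leftrightarrow(\varphi\to\neg[\varphi]\psi)$; (A7) $[\varphi](\psi\wedge\chi)\leftrightarrow([\varphi]\psi\wedge[\varphi]\chi)$;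 (A8) $[\varphi]K_a\psi\leftrightarrow(\varphi\to K_a[\varphi]\psi)$; (A9) $[\varphi][\psi]\chi\leftrightarrow[\varphi\wedge[\varphi]\psi]\chi$; (A10) $[G,\chi]\varphi\to\chi\wedge[\psi_G\wedge\chi]\varphi$ for any $\psi_G$; (A11) $[\langle G\rangle]\varphi\to\langle A\setminus G,\psi_G\rangle\varphi$ for any $\psi_G$; and closed under: (R0) modus ponens; (R1) from $\varphi$ infer $K_a\varphi$; (R2) from $\varphi$ infer $[\psi]\varphi$; (R3) from $\varphi$ infer $[G,\chi]\varphi$; (R4) from $\varphi$ infer $[\langle G\rangle]\varphi$; (R5) from $\eta(\chi\wedge[\psi_G\wedge\chi]\varphi)$ for all $\psi_G$ infer $\eta([G,\chi]\varphi)$; (R6) from $\eta(\langle A\setminus G,\psi_G\rangle\varphi)$ for all $\psi_G$ infer $\eta([\langle G\rangle]\varphi)$. A theory is a set of formulas containing $\mathbf{CoRGAL}$ and closed under (R0), (R5), (R6). A theory $x$ is consistent iff $\bot\notin x$, and maximal iff for every formula $\varphi$, $\varphi\in x$ or $\neg\varphi\in x$. *)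

theory Defs
  imports "HOL-Library.Countable"
begin

text \<open>Formulas of CoRGAL. Agents: a finite type 'a (A = UNIV); propositional
  variables: a countable type 'p.\<close>

datatype ('a, 'p) fm =
    Atom 'p
  | Neg "('a, 'p) fm"
  | Conj "('a, 'p) fm" "('a, 'p) fm"
  | K 'a "('a, 'p) fm"
  | Ann "('a, 'p) fm" "('a, 'p) fm"
  | GAnn "'a set" "('a, 'p) fm" "('a, 'p) fm"
  | Coal "'a set" "('a, 'p) fm"

definition Bot :: "('a, 'p) fm" where
  "Bot = Conj (Atom undefined) (Neg (Atom undefined))"

definition Top :: "('a, 'p) fm" where
  "Top = Neg Bot"

definition Imp :: "('a, 'p) fm \<Rightarrow> ('a, 'p) fm \<Rightarrow> ('a, 'p) fm" where
  "Imp a b = Neg (Conj a (Neg b))"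

definition Iff :: "('a, 'p) fm \<Rightarrow> ('a, 'p) fm \<Rightarrow> ('a, 'p) fm" where
  "Iff a b = Conj (Imp a b) (Imp b a)"

definition DAnn :: "('a, 'p) fm \<Rightarrow> ('a, 'p) fm \<Rightarrow> ('a, 'p) fm" where
  "DAnn a b = Neg (Ann a (Neg b))"

definition DGAnn :: "'a set \<Rightarrow> ('a, 'p) fm \<Rightarrow> ('a, 'p) fm \<Rightarrow> ('a, 'p) fm" where
  "DGAnn G a b = Neg (GAnn G a (Neg b))"

fun is_EL :: "('a, 'p) fm \<Rightarrow> bool" where
  "is_EL (Atom p) = True"
| "is_EL (Neg a) = is_EL a"
| "is_EL (Conj a b) = (is_EL a \<and> is_EL b)"
| "is_EL (K i a) = is_EL a"
| "is_EL _ = False"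

fun conj_list :: "('a, 'p) fm list \<Rightarrow> ('a, 'p) fm" where
  "conj_list [] = Top"
| "conj_list [a] = a"
| "conj_list (a # as) = Conj a (conj_list as)"

definition LG :: "'a set \<Rightarrow> ('a, 'p) fm set" where
  "LG G = {conj_list (map (\<lambda>i. K i (f i)) xs) | xs f.
             distinct xs \<and> set xs = G \<and> (\<forall>i\<in>G. is_EL (f i))}"

text \<open>Propositional tautologies: formulas true under every valuation treating
  non-Boolean subformulas as atoms.\<close>
fun peval :: "(('a, 'p) fm \<Rightarrow> bool) \<Rightarrow> ('a, 'p) fm \<Rightarrow> bool" where
  "peval v (Neg a) = (\<not> peval v a)"
| "peval v (Conj a b) = (peval v a \<and> peval v b)"
| "peval v a = v a"

definition taut :: "('a, 'p) fm \<Rightarrow> bool" where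
  "taut a = (\<forall>v. peval v a)"

datatype ('a, 'p) nform =
    Hole
  | ImpN "('a, 'p) fm" "('a, 'p) nform"
  | KN 'a "('a, 'p) nform"
  | AnnN "('a, 'p) fm" "('a, 'p) nform"

fun fill :: "('a, 'p) nform \<Rightarrow> ('a, 'p) fm \<Rightarrow> ('a, 'p) fm" where
  "fill Hole c = c"
| "fill (ImpN a n) c = Imp a (fill n c)"
| "fill (KN i n) c = K i (fill n c)"
| "fill (AnnN a n) c = Ann a (fill n c)"

inductive_set CoRGAL :: "('a::finite, 'p) fm set" where
  A0: "taut a \<Longrightarrow> a \<in> CoRGAL"
| A1: "Imp (K i (Imp a b)) (Imp (K i a) (K i b)) \<in> CoRGAL"
| A2: "Imp (K i a) a \<in> CoRGAL"
| A3: "Imp (K i a) (K i (K i a)) \<in> CoRGAL"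
| A4: "Imp (Neg (K i a)) (K i (Neg (K i a))) \<in> CoRGAL"
| A5: "Iff (Ann a (Atom p)) (Imp a (Atom p)) \<in> CoRGAL"
| A6: "Iff (Ann a (Neg b)) (Imp a (Neg (Ann a b))) \<in> CoRGAL"
| A7: "Iff (Ann a (Conj b c)) (Conj (Ann a b) (Ann a c)) \<in> CoRGAL"
| A8: "Iff (Ann a (K i b)) (Imp a (K i (Ann a b))) \<in> CoRGAL"
| A9: "Iff (Ann a (Ann b c)) (Ann (Conj a (Ann a b)) c) \<in> CoRGAL"
| A10: "\<psi> \<in> LG G \<Longrightarrow> Imp (GAnn G c a) (Conj c (Ann (Conj \<psi> c) a)) \<in> CoRGAL"
| A11: "\<psi> \<in> LG G \<Longrightarrow> Imp (Coal G a) (DGAnn (- G) \<psi> a) \<in> CoRGAL"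
| R0: "Imp a b \<in> CoRGAL \<Longrightarrow> a \<in> CoRGAL \<Longrightarrow> b \<in> CoRGAL"
| R1: "a \<in> CoRGAL \<Longrightarrow> K i a \<in> CoRGAL"
| R2: "a \<in> CoRGAL \<Longrightarrow> Ann b a \<in> CoRGAL"
| R3: "a \<in> CoRGAL \<Longrightarrow> GAnn G c a \<in> CoRGAL"
| R4: "a \<in> CoRGAL \<Longrightarrow> Coal G a \<in> CoRGAL"
| R5: "(\<forall>\<psi>\<in>LG G. fill n (Conj c (Ann (Conj \<psi> c) a)) \<in> CoRGAL)
        \<Longrightarrow> fill n (GAnn G c a) \<in> CoRGAL"
| R6: "(\<forall>\<psi>\<in>LG G. fill n (DGAnn (- G) \<psi> a) \<in> CoRGAL)
        \<Longrightarrow> fill n (Coal G a) \<in> CoRGAL"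

definition is_theory :: "('a::finite, 'p) fm set \<Rightarrow> bool" where
  "is_theory x \<longleftrightarrow>
     CoRGAL \<subseteq> x
   \<and> (\<forall>a b. Imp a b \<in> x \<longrightarrow> a \<in> x \<longrightarrow> b \<in> x)
   \<and> (\<forall>n G c a. (\<forall>\<psi>\<in>LG G. fill n (Conj c (Ann (Conj \<psi> c) a)) \<in> x)
                  \<longrightarrow> fill n (GAnn G c a) \<in> x)
   \<and> (\<forall>n G a. (\<forall>\<psi>\<in>LG G. fill n (DGAnn (- G) \<psi> a) \<in> x)
                  \<longrightarrow> fill n (Coal G a) \<in> x)"

definition consistent :: "('a, 'p) fm set \<Rightarrow> bool" where
  "consistent x \<longleftrightarrow> Bot \<notin> x"

definition maximal :: "('a, 'p) fm set \<Rightarrow> bool" where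
  "maximal x \<longleftrightarrow> (\<forall>a. a \<in> x \<or> Neg a \<in> x)"

end

theory Submission
  imports Defs
begin

text \<open>A Lindenbaum construction that also respects the infinitary rules R5 and R6.
  Enumerate all formulas and build an increasing chain of consistent theories in which
  stage k decides the k-th formula f: add f if \<open>\<not> f\<close> is not yet present; otherwise
  \<open>\<not> f\<close> is already there, and if f is the conclusion of an instance of R5 or R6 then
  some premise p of that instance is missing, so \<open>\<not> p\<close> can be added consistently as a
  witness. Since the conclusion of an R5/R6 instance determines the instance, the union
  of the chain is closed under R5 and R6. Adding f to a theory y means passing to
  \<open>{b. f \<rightarrow> b \<in> y}\<close>, again a theory because R5 and R6 may be applied under the
  necessity form \<open>f \<rightarrow> \<sharp>\<close>.\<close>

datatype ('s, 'a, 'p) labelled_fm =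
    LAtom 'p
  | LNeg "('s, 'a, 'p) labelled_fm"
  | LConj "('s, 'a, 'p) labelled_fm" "('s, 'a, 'p) labelled_fm"
  | LK 'a "('s, 'a, 'p) labelled_fm"
  | LAnn "('s, 'a, 'p) labelled_fm" "('s, 'a, 'p) labelled_fm"
  | LGAnn 's "('s, 'a, 'p) labelled_fm" "('s, 'a, 'p) labelled_fm"
  | LCoal 's "('s, 'a, 'p) labelled_fm"

instance labelled_fm :: (countable, countable, countable) countable
  by countable_datatype

fun labelled :: "('a, 'p) fm \<Rightarrow> ('a set, 'a, 'p) labelled_fm" where
  "labelled (Atom p) = LAtom p"
| "labelled (Neg a) = LNeg (labelled a)"
| "labelled (Conj a b) = LConj (labelled a) (labelled b)"
| "labelled (K i a) = LK i (labelled a)"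
| "labelled (Ann a b) = LAnn (labelled a) (labelled b)"
| "labelled (GAnn G a b) = LGAnn G (labelled a) (labelled b)"
| "labelled (Coal G a) = LCoal G (labelled a)"

lemma inj_labelled: "inj labelled"
proof (rule injI)
  fix x y :: "('a, 'p) fm"
  show "labelled x = labelled y \<Longrightarrow> x = y"
    by (induction x arbitrary: y; case_tac y; simp)
qed

text \<open>\<open>countable_datatype\<close> cannot handle the field of type \<open>'a set\<close> directly, hence the
  detour through a copy of the datatype with group labels of an arbitrary type.\<close>
instance fm :: (finite, countable) countable
  using inj_compose[OF inj_to_nat inj_labelled] by intro_classes blast

lemma theory_CoRGAL: "is_theory y \<Longrightarrow> CoRGAL \<subseteq> y"
  unfolding is_theory_def by blast

lemma theory_MP: "is_theory y \<Longrightarrow> Imp a b \<in> y \<Longrightarrow> a \<in> y \<Longrightarrow> b \<in> y"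
  unfolding is_theory_def by blast

lemma theory_taut: "is_theory y \<Longrightarrow> taut a \<Longrightarrow> a \<in> y"
  unfolding is_theory_def using CoRGAL.A0 by blast

lemma theory_taut_MP: "is_theory y \<Longrightarrow> taut (Imp a b) \<Longrightarrow> a \<in> y \<Longrightarrow> b \<in> y"
  using theory_taut theory_MP by blast

lemma theory_taut_MP2:
  "is_theory y \<Longrightarrow> taut (Imp a (Imp b c)) \<Longrightarrow> a \<in> y \<Longrightarrow> b \<in> y \<Longrightarrow> c \<in> y"
  using theory_taut theory_MP by blast

lemma consistent_theory_not_both:
  "is_theory y \<Longrightarrow> consistent y \<Longrightarrow> f \<in> y \<Longrightarrow> Neg f \<notin> y"
  unfolding consistent_def using theory_taut_MP2[of y f "Neg f" Bot]
  by (auto simp: taut_def Imp_def Bot_def)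

definition omega_rule :: "('a, 'p) fm set \<Rightarrow> ('a, 'p) fm \<Rightarrow> bool" where
  "omega_rule P f \<longleftrightarrow>
     (\<exists>n G c a. P = {fill n (Conj c (Ann (Conj \<psi> c) a)) | \<psi>. \<psi> \<in> LG G}
                \<and> f = fill n (GAnn G c a))
   \<or> (\<exists>n G a. P = {fill n (DGAnn (- G) \<psi> a) | \<psi>. \<psi> \<in> LG G} \<and> f = fill n (Coal G a))"

lemma omega_rule_GAnn:
  "omega_rule {fill n (Conj c (Ann (Conj \<psi> c) a)) | \<psi>. \<psi> \<in> LG G} (fill n (GAnn G c a))"
  unfolding omega_rule_def by blast

lemma omega_rule_Coal:
  "omega_rule {fill n (DGAnn (- G) \<psi> a) | \<psi>. \<psi> \<in> LG G} (fill n (Coal G a))"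
  unfolding omega_rule_def by blast

lemma theory_omega_rule:
  assumes "is_theory y" "omega_rule P f" "P \<subseteq> y"
  shows "f \<in> y"
  using assms(2) unfolding omega_rule_def
proof (elim disjE exE conjE)
  fix n G c a
  assume "P = {fill n (Conj c (Ann (Conj \<psi> c) a)) | \<psi>. \<psi> \<in> LG G}" "f = fill n (GAnn G c a)"
  then show "f \<in> y" using assms(1,3) unfolding is_theory_def by blast
next
  fix n G a
  assume "P = {fill n (DGAnn (- G) \<psi> a) | \<psi>. \<psi> \<in> LG G}" "f = fill n (Coal G a)"
  then show "f \<in> y" using assms(1,3) unfolding is_theory_def by blast
qed

lemma is_theoryI:
  assumes "CoRGAL \<subseteq> y" "\<And>a b. Imp a b \<in> y \<Longrightarrow> a \<in> y \<Longrightarrow> b \<in> y"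
    and "\<And>P f. omega_rule P f \<Longrightarrow> P \<subseteq> y \<Longrightarrow> f \<in> y"
  shows "is_theory y"
  unfolding is_theory_def
proof (intro conjI allI impI)
  fix n G c a assume "\<forall>\<psi>\<in>LG G. fill n (Conj c (Ann (Conj \<psi> c) a)) \<in> y"
  then show "fill n (GAnn G c a) \<in> y" using assms(3)[OF omega_rule_GAnn] by blast
next
  fix n G a assume "\<forall>\<psi>\<in>LG G. fill n (DGAnn (- G) \<psi> a) \<in> y"
  then show "fill n (Coal G a) \<in> y" using assms(3)[OF omega_rule_Coal] by blast
qed (use assms(1,2) in blast)+

definition quantified :: "('a, 'p) fm \<Rightarrow> bool" where
  "quantified X \<longleftrightarrow> (\<exists>G c a. X = GAnn G c a) \<or> (\<exists>G a. X = Coal G a)"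

lemma fill_quantified_inject:
  "quantified X \<Longrightarrow> quantified Y \<Longrightarrow> fill n X = fill m Y \<Longrightarrow> n = m \<and> X = Y"
  by (induction n arbitrary: m; case_tac m) (auto simp: quantified_def Imp_def)

lemma omega_rule_unique:
  assumes "omega_rule P f" "omega_rule Q f"
  shows "P = Q"
  using assms unfolding omega_rule_def
  by (elim disjE exE conjE)
    (auto dest: fill_quantified_inject[rotated 2] simp: quantified_def)

definition extend :: "('a, 'p) fm set \<Rightarrow> ('a, 'p) fm \<Rightarrow> ('a, 'p) fm set" where
  "extend y f = {b. Imp f b \<in> y}"

lemma subset_extend: "is_theory y \<Longrightarrow> y \<subseteq> extend y f"
  unfolding extend_def using theory_taut_MP[of y b "Imp f b" for b]
  by (auto simp: taut_def Imp_def)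

lemma mem_extend: "is_theory y \<Longrightarrow> f \<in> extend y f"
  unfolding extend_def using theory_taut[of y "Imp f f"] by (simp add: taut_def Imp_def)

lemma is_theory_extend:
  assumes y: "is_theory y"
  shows "is_theory (extend y f)"
  unfolding is_theory_def
proof (intro conjI allI impI)
  show "CoRGAL \<subseteq> extend y f"
    using theory_CoRGAL[OF y] subset_extend[OF y] by blast
next
  fix a b assume "Imp a b \<in> extend y f" "a \<in> extend y f"
  then show "b \<in> extend y f"
    unfolding extend_def using theory_taut_MP2[OF y, of "Imp f (Imp a b)" "Imp f a" "Imp f b"]
    by (simp add: taut_def Imp_def)
next
  fix n G c a assume "\<forall>\<psi>\<in>LG G. fill n (Conj c (Ann (Conj \<psi> c) a)) \<in> extend y f"
  then have "\<forall>\<psi>\<in>LG G. fill (ImpN f n) (Conj c (Ann (Conj \<psi> c) a)) \<in> y"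
    by (simp add: extend_def)
  then have "fill (ImpN f n) (GAnn G c a) \<in> y"
    using y unfolding is_theory_def by blast
  then show "fill n (GAnn G c a) \<in> extend y f" by (simp add: extend_def)
next
  fix n G a assume "\<forall>\<psi>\<in>LG G. fill n (DGAnn (- G) \<psi> a) \<in> extend y f"
  then have "\<forall>\<psi>\<in>LG G. fill (ImpN f n) (DGAnn (- G) \<psi> a) \<in> y"
    by (simp add: extend_def)
  then have "fill (ImpN f n) (Coal G a) \<in> y"
    using y unfolding is_theory_def by blast
  then show "fill n (Coal G a) \<in> extend y f" by (simp add: extend_def)
qed

lemma consistent_extend: "is_theory y \<Longrightarrow> Neg f \<notin> y \<Longrightarrow> consistent (extend y f)"
  unfolding extend_def consistent_def using theory_taut_MP[of y "Imp f Bot" "Neg f"]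
  by (auto simp: taut_def Imp_def Bot_def)

lemma consistent_extend_Neg: "is_theory y \<Longrightarrow> f \<notin> y \<Longrightarrow> consistent (extend y (Neg f))"
  unfolding extend_def consistent_def using theory_taut_MP[of y "Imp (Neg f) Bot" f]
  by (auto simp: taut_def Imp_def Bot_def)

definition settles :: "('a, 'p) fm set \<Rightarrow> ('a, 'p) fm \<Rightarrow> bool" where
  "settles z f \<longleftrightarrow> (f \<in> z \<or> Neg f \<in> z)
     \<and> (\<forall>P. omega_rule P f \<longrightarrow> f \<notin> z \<longrightarrow> (\<exists>p\<in>P. Neg p \<in> z))"

lemma settling_extension_exists:
  assumes y: "is_theory y" and "consistent y"
  shows "\<exists>z. y \<subseteq> z \<and> is_theory z \<and> consistent z \<and> settles z f"
proof (cases "Neg f \<in> y")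
  case False
  have "settles (extend y f) f" using mem_extend[OF y] unfolding settles_def by blast
  with subset_extend[OF y] is_theory_extend[OF y] consistent_extend[OF y False]
  show ?thesis by blast
next
  case True
  then have "f \<notin> y"
    using consistent_theory_not_both[OF y \<open>consistent y\<close>] by blast
  show ?thesis
  proof (cases "\<exists>P. omega_rule P f")
    case False
    then show ?thesis using y \<open>consistent y\<close> True unfolding settles_def by blast
  next
    case True
    then obtain P where P: "omega_rule P f" by blast
    then obtain p where "p \<in> P" "p \<notin> y"
      using theory_omega_rule[OF y P] \<open>f \<notin> y\<close> by blast
    define z where "z = extend y (Neg p)"
    have z: "is_theory z" "consistent z" "y \<subseteq> z" "Neg p \<in> z"
      using y \<open>p \<notin> y\<close> is_theory_extend consistent_extend_Neg subset_extend mem_extend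
      unfolding z_def by blast+
    have "settles z f"
      unfolding settles_def using \<open>Neg f \<in> y\<close> z \<open>p \<in> P\<close> omega_rule_unique[OF P] by blast
    then show ?thesis using z by blast
  qed
qed

definition settle :: "('a::finite, 'p) fm set \<Rightarrow> ('a, 'p) fm \<Rightarrow> ('a, 'p) fm set" where
  "settle y f = (SOME z. y \<subseteq> z \<and> is_theory z \<and> consistent z \<and> settles z f)"

lemma settle_spec:
  "is_theory y \<Longrightarrow> consistent y \<Longrightarrow>
     y \<subseteq> settle y f \<and> is_theory (settle y f) \<and> consistent (settle y f) \<and> settles (settle y f) f"
  unfolding settle_def by (rule someI_ex) (rule settling_extension_exists)

primrec lindenbaum_chain :: "('a::finite, 'p::countable) fm set \<Rightarrow> nat \<Rightarrow> ('a, 'p) fm set" where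
  "lindenbaum_chain x 0 = x"
| "lindenbaum_chain x (Suc k) = settle (lindenbaum_chain x k) (from_nat k)"

lemma lindenbaum_chain:
  assumes "is_theory x" "consistent x"
  shows "mono (lindenbaum_chain x)"
    and "is_theory (lindenbaum_chain x k)" "consistent (lindenbaum_chain x k)"
    and "\<exists>k. settles (lindenbaum_chain x k) f"
proof -
  have chain: "is_theory (lindenbaum_chain x k) \<and> consistent (lindenbaum_chain x k)" for k
    using assms settle_spec by (induction k) auto
  then show "is_theory (lindenbaum_chain x k)" "consistent (lindenbaum_chain x k)"
    by blast+
  show "mono (lindenbaum_chain x)"
    unfolding mono_iff_le_Suc
  proof
    fix k
    show "lindenbaum_chain x k \<le> lindenbaum_chain x (Suc k)"
      using chain[of k] settle_spec[of "lindenbaum_chain x k" "from_nat k"] by simp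
  qed
  show "\<exists>k. settles (lindenbaum_chain x k) f"
    using chain[of "to_nat f"] settle_spec[of "lindenbaum_chain x (to_nat f)" f]
    by (intro exI[of _ "Suc (to_nat f)"]) simp
qed

lemma maximal_consistent_theory_UN:
  fixes Z :: "nat \<Rightarrow> ('a::finite, 'p) fm set"
  assumes mono: "mono Z" and theories: "\<And>k. is_theory (Z k)" and cons: "\<And>k. consistent (Z k)"
    and settled: "\<And>f. \<exists>k. settles (Z k) f"
  shows "is_theory (\<Union>k. Z k) \<and> consistent (\<Union>k. Z k) \<and> maximal (\<Union>k. Z k)"
proof (intro conjI)
  have common: "\<exists>k. a \<in> Z k \<and> b \<in> Z k" if "a \<in> (\<Union>k. Z k)" "b \<in> (\<Union>k. Z k)" for a b
  proof -
    from that obtain i j where "a \<in> Z i" "b \<in> Z j" by blast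
    then show ?thesis
      using monoD[OF mono, of i "max i j"] monoD[OF mono, of j "max i j"] by auto
  qed
  show "consistent (\<Union>k. Z k)" using cons unfolding consistent_def by blast
  show "maximal (\<Union>k. Z k)"
    unfolding maximal_def
  proof
    fix f
    obtain k where "settles (Z k) f" using settled by blast
    then show "f \<in> (\<Union>k. Z k) \<or> Neg f \<in> (\<Union>k. Z k)" unfolding settles_def by blast
  qed
  show "is_theory (\<Union>k. Z k)"
  proof (rule is_theoryI)
    show "CoRGAL \<subseteq> (\<Union>k. Z k)" using theory_CoRGAL[OF theories] by blast
  next
    fix a b assume "Imp a b \<in> (\<Union>k. Z k)" "a \<in> (\<Union>k. Z k)"
    then obtain k where "Imp a b \<in> Z k" "a \<in> Z k" using common by blast
    then show "b \<in> (\<Union>k. Z k)" using theories theory_MP by blast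
  next
    fix P f assume P: "omega_rule P f" "P \<subseteq> (\<Union>k. Z k)"
    obtain k where k: "settles (Z k) f" using settled by blast
    show "f \<in> (\<Union>k. Z k)"
    proof (rule ccontr)
      assume "f \<notin> (\<Union>k. Z k)"
      then obtain p where "p \<in> P" "Neg p \<in> Z k" using k P(1) unfolding settles_def by blast
      moreover obtain j where "p \<in> Z j" using \<open>p \<in> P\<close> P(2) by blast
      ultimately obtain i where "p \<in> Z i" "Neg p \<in> Z i" using common by blast
      then show False using consistent_theory_not_both theories cons by blast
    qed
  qed
qed

theorem mainTheorem12:
  fixes x :: "('a::finite, 'p::countable) fm set"
  assumes "is_theory x" and "consistent x"
  shows "\<exists>y. x \<subseteq> y \<and> is_theory y \<and> consistent y \<and> maximal y"
proof (intro exI conjI)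
  let ?y = "\<Union>k. lindenbaum_chain x k"
  show "x \<subseteq> ?y" using lindenbaum_chain.simps(1) by blast
  show "is_theory ?y" "consistent ?y" "maximal ?y"
    using maximal_consistent_theory_UN[OF lindenbaum_chain[OF assms]] by blast+
qed

end
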